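(* Let $K$ be a field, $X=\{x_1,\dots,x_n\}$, $H=\langle h_1,\dots,h_r\rangle\subseteq K[X]$ and $f\in K[X]$. Let $Y=\{x_1,\dots,x_d\}$ be a maximum-size set of independent variables for $H$ (so $d=\dim H$), let $Z=\{x_{d+1},\dots,x_n\}$, and let $H'=\langle h_1,\dots,h_r\rangle K(Y)[Z]$. Then $$\langle h_1,\dots,h_r,f\cdot t-1\rangle K[X,t]\cap K[Y]=\langle 0\rangle \quad\text{and}\quad \langle h_1,\dots,h_r,f\rangle K[X]\cap K[Y]=\langle 0\rangle$$ (with $t$ a new variable) if and only if $f$ is a non-zero zero divisor in $K(Y)[Z]/\sqrt{H'}$.
   Context: A set $Y=\{x_1,\dots,x_d\}\subseteq X$ is a maximum-size set of independent variables for $H$ if $H\cap K[Y]=\langle 0\rangle$ and for every subset $W\subseteq X$ with more than $d$ elements $H\cap K[W]\neq\langle 0\rangle$. $K(Y)$ is the field of rational functions in $x_1,\dots,x_d$, and $\sqrt{H'}$ is the radical of $H'$ in $K(Y)[Z]$. *)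

theory Defs
  imports "HOL-Library.Poly_Mapping" "HOL-Computational_Algebra.Fraction_Field"
begin

text \<open>Multivariate polynomials over K in variables x_0, x_1, ... (indexed by nat):
  finitely supported maps from monomials (exponent vectors) to coefficients.\<close>
type_synonym 'a mpoly = "(nat \<Rightarrow>\<^sub>0 nat) \<Rightarrow>\<^sub>0 'a"

definition Var :: "nat \<Rightarrow> ('a::zero_neq_one) mpoly" where
  "Var i = Poly_Mapping.single (Poly_Mapping.single i 1) 1"

definition polys_in :: "nat set \<Rightarrow> ('a::zero) mpoly set" where
  "polys_in V = {p. \<forall>m\<in>Poly_Mapping.keys p. Poly_Mapping.keys m \<subseteq> V}"

definition gen_ideal :: "'b::comm_ring_1 set \<Rightarrow> 'b set \<Rightarrow> 'b set" where
  "gen_ideal R G = {q. \<exists>c. (\<forall>g\<in>G. c g \<in> R) \<and> q = (\<Sum>g\<in>G. c g * g)}"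

definition radical_in :: "'b::comm_ring_1 set \<Rightarrow> 'b set \<Rightarrow> 'b set" where
  "radical_in R I = {a \<in> R. \<exists>m::nat. a ^ m \<in> I}"

definition max_indep_vars :: "nat \<Rightarrow> ('a::zero) mpoly set \<Rightarrow> nat set \<Rightarrow> bool" where
  "max_indep_vars n H Y \<longleftrightarrow> Y \<subseteq> {0..<n} \<and> H \<inter> polys_in Y = {0} \<and>
     (\<forall>W. W \<subseteq> {0..<n} \<and> card W > card Y \<longrightarrow> H \<inter> polys_in W \<noteq> {0})"

text \<open>K(Y)[Z] with Y = {x_0..x_(d-1)}, Z = {x_d..x_(n-1)}, realised inside the fraction field
  of the polynomial ring as the localisation {p/q | p in K[X], 0 \<noteq> q in K[Y]}.\<close>
definition KY_Z :: "nat \<Rightarrow> nat \<Rightarrow> ('a::field) mpoly fract set" where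
  "KY_Z d n = {Fract p q | p q. p \<in> polys_in {0..<n} \<and> q \<in> polys_in {0..<d} \<and> q \<noteq> 0}"

definition nonzero_zero_divisor_mod :: "'b::comm_ring_1 set \<Rightarrow> 'b set \<Rightarrow> 'b \<Rightarrow> bool" where
  "nonzero_zero_divisor_mod R J a \<longleftrightarrow>
     a \<in> R \<and> a \<notin> J \<and> (\<exists>b\<in>R. b \<notin> J \<and> a * b \<in> J)"

end

theory Submission
  imports Defs "HOL-Library.FuncSet"
begin

(* Write A = K(Y)[Z], I = H'A and J for the radical of I. Because Y is a maximal independent set,
   every variable of Z satisfies a monic polynomial over K(Y) modulo I, so A/I is spanned over K(Y)
   by finitely many monomials and f satisfies a nontrivial polynomial relation over K(Y) modulo I.
   Factoring the lowest power of f out of that relation shows that modulo J the element f is either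
   a unit or a zero divisor. The Rabinowitsch trick (substituting t = 1/f) shows that the first
   ideal meets K[Y] exactly when f lies in J, and clearing denominators shows that the second ideal
   meets K[Y] exactly when f is a unit modulo I, equivalently modulo J. *)

section \<open>Subrings, generated ideals and radicals\<close>

definition subring :: "'b::comm_ring_1 set \<Rightarrow> bool" where
  "subring R \<longleftrightarrow> 0 \<in> R \<and> 1 \<in> R \<and> (\<forall>x\<in>R. \<forall>y\<in>R. x + y \<in> R \<and> x * y \<in> R \<and> x - y \<in> R)"

lemma gen_ideal_mono_ring: "R \<subseteq> R' \<Longrightarrow> gen_ideal R G \<subseteq> gen_ideal R' G"
  unfolding gen_ideal_def by blast

lemma gen_ideal_image:
  assumes "inj_on \<phi> G"
  shows "x \<in> gen_ideal R (\<phi> ` G) \<longleftrightarrow> (\<exists>c. (\<forall>g\<in>G. c g \<in> R) \<and> x = (\<Sum>g\<in>G. c g * \<phi> g))"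
proof
  assume "x \<in> gen_ideal R (\<phi> ` G)"
  then obtain c where c: "\<forall>h\<in>\<phi> ` G. c h \<in> R" "x = (\<Sum>h\<in>\<phi> ` G. c h * h)"
    unfolding gen_ideal_def by auto
  then have "x = (\<Sum>g\<in>G. c (\<phi> g) * \<phi> g)" by (simp add: sum.reindex[OF assms])
  then show "\<exists>c. (\<forall>g\<in>G. c g \<in> R) \<and> x = (\<Sum>g\<in>G. c g * \<phi> g)"
    using c(1) by (intro exI[of _ "\<lambda>g. c (\<phi> g)"]) auto
next
  assume "\<exists>c. (\<forall>g\<in>G. c g \<in> R) \<and> x = (\<Sum>g\<in>G. c g * \<phi> g)"
  then obtain c where c: "\<forall>g\<in>G. c g \<in> R" "x = (\<Sum>g\<in>G. c g * \<phi> g)" by auto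
  define c' where "c' h = c (the_inv_into G \<phi> h)" for h
  have "x = (\<Sum>h\<in>\<phi> ` G. c' h * h)"
    unfolding c(2) c'_def by (simp add: sum.reindex[OF assms] the_inv_into_f_f[OF assms])
  moreover have "\<forall>h\<in>\<phi> ` G. c' h \<in> R"
    unfolding c'_def using c(1) by (auto simp: the_inv_into_f_f[OF assms])
  ultimately show "x \<in> gen_ideal R (\<phi> ` G)" unfolding gen_ideal_def by blast
qed

context
  fixes R :: "'b::comm_ring_1 set"
  assumes R: "subring R"
begin

lemma subring_0: "0 \<in> R"
  and subring_1: "1 \<in> R"
  and subring_add: "x \<in> R \<Longrightarrow> y \<in> R \<Longrightarrow> x + y \<in> R"
  and subring_mult: "x \<in> R \<Longrightarrow> y \<in> R \<Longrightarrow> x * y \<in> R"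
  and subring_diff: "x \<in> R \<Longrightarrow> y \<in> R \<Longrightarrow> x - y \<in> R"
  using R unfolding subring_def by auto

lemma subring_uminus: "x \<in> R \<Longrightarrow> - x \<in> R"
  using subring_diff[OF subring_0, of x] by simp

lemma subring_sum: "(\<And>i. i \<in> A \<Longrightarrow> f i \<in> R) \<Longrightarrow> sum f A \<in> R"
  by (induction A rule: infinite_finite_induct) (auto intro: subring_0 subring_add)

lemma subring_prod: "(\<And>i. i \<in> A \<Longrightarrow> f i \<in> R) \<Longrightarrow> prod f A \<in> R"
  by (induction A rule: infinite_finite_induct) (auto intro: subring_1 subring_mult)

lemma subring_power: "x \<in> R \<Longrightarrow> x ^ k \<in> R"
  by (induction k) (auto intro: subring_1 subring_mult)

lemmas subring_closed =
  subring_0 subring_1 subring_add subring_mult subring_diff subring_uminus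
  subring_sum subring_prod subring_power

lemma gen_ideal_0: "0 \<in> gen_ideal R G"
  unfolding gen_ideal_def by (auto intro!: exI[of _ "\<lambda>_. 0"] subring_0)

lemma gen_ideal_add: "x \<in> gen_ideal R G \<Longrightarrow> y \<in> gen_ideal R G \<Longrightarrow> x + y \<in> gen_ideal R G"
  unfolding gen_ideal_def
proof (elim CollectE exE conjE, intro CollectI)
  fix c c' assume "\<forall>g\<in>G. c g \<in> R" "x = (\<Sum>g\<in>G. c g * g)" "\<forall>g\<in>G. c' g \<in> R" "y = (\<Sum>g\<in>G. c' g * g)"
  then show "\<exists>c. (\<forall>g\<in>G. c g \<in> R) \<and> x + y = (\<Sum>g\<in>G. c g * g)"
    by (intro exI[of _ "\<lambda>g. c g + c' g"]) (auto intro: subring_add simp: sum.distrib algebra_simps)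
qed

lemma gen_ideal_mult: "r \<in> R \<Longrightarrow> x \<in> gen_ideal R G \<Longrightarrow> r * x \<in> gen_ideal R G"
  unfolding gen_ideal_def
proof (elim CollectE exE conjE, intro CollectI)
  fix c assume "r \<in> R" "\<forall>g\<in>G. c g \<in> R" "x = (\<Sum>g\<in>G. c g * g)"
  then show "\<exists>c. (\<forall>g\<in>G. c g \<in> R) \<and> r * x = (\<Sum>g\<in>G. c g * g)"
    by (intro exI[of _ "\<lambda>g. r * c g"]) (auto intro: subring_mult simp: sum_distrib_left algebra_simps)
qed

lemma gen_ideal_generator:
  assumes "finite G" "a \<in> G"
  shows "a \<in> gen_ideal R G"
proof -
  have "(\<Sum>g\<in>G. (if g = a then 1 else 0) * g) = (\<Sum>g\<in>G. if g = a then g else 0)"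
    by (rule sum.cong) auto
  also have "\<dots> = a" using assms by (simp add: sum.delta')
  finally have "(\<Sum>g\<in>G. (if g = a then 1 else 0) * g) = a" .
  then show ?thesis unfolding gen_ideal_def
    by (intro CollectI exI[of _ "\<lambda>g. if g = a then 1 else 0"]) (auto intro: subring_0 subring_1)
qed

lemma gen_ideal_mono:
  assumes "finite G'" "G \<subseteq> G'"
  shows "gen_ideal R G \<subseteq> gen_ideal R G'"
proof
  fix x assume "x \<in> gen_ideal R G"
  then obtain c where c: "\<forall>g\<in>G. c g \<in> R" "x = (\<Sum>g\<in>G. c g * g)" unfolding gen_ideal_def by auto
  have "x = (\<Sum>g\<in>G'. (if g \<in> G then c g else 0) * g)"
    unfolding c(2) by (rule sum.mono_neutral_cong_left) (use assms in auto)
  then show "x \<in> gen_ideal R G'" unfolding gen_ideal_def using c(1)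
    by (intro CollectI exI[of _ "\<lambda>g. if g \<in> G then c g else 0"]) (auto intro: subring_0)
qed

lemma gen_ideal_insert:
  assumes "finite G"
  shows "y \<in> gen_ideal R (insert a G) \<longleftrightarrow> (\<exists>c\<in>R. \<exists>x\<in>gen_ideal R G. y = c * a + x)"
proof
  assume y: "y \<in> gen_ideal R (insert a G)"
  show "\<exists>c\<in>R. \<exists>x\<in>gen_ideal R G. y = c * a + x"
  proof (cases "a \<in> G")
    case True
    then show ?thesis using y subring_0 by (force simp: insert_absorb)
  next
    case False
    obtain c where c: "\<forall>g\<in>insert a G. c g \<in> R" "y = (\<Sum>g\<in>insert a G. c g * g)"
      using y unfolding gen_ideal_def by auto
    have "y = c a * a + (\<Sum>g\<in>G. c g * g)" using c(2) False assms by simp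
    moreover have "(\<Sum>g\<in>G. c g * g) \<in> gen_ideal R G" unfolding gen_ideal_def using c(1) by auto
    ultimately show ?thesis using c(1) by auto
  qed
next
  assume "\<exists>c\<in>R. \<exists>x\<in>gen_ideal R G. y = c * a + x"
  then obtain c x where cx: "c \<in> R" "x \<in> gen_ideal R G" "y = c * a + x" by blast
  have "c * a \<in> gen_ideal R (insert a G)"
    using cx(1) assms by (intro gen_ideal_mult gen_ideal_generator) auto
  moreover have "x \<in> gen_ideal R (insert a G)" using cx(2) gen_ideal_mono[of "insert a G" G] assms by auto
  ultimately show "y \<in> gen_ideal R (insert a G)" unfolding cx(3) by (rule gen_ideal_add)
qed

lemma gen_ideal_subset: "G \<subseteq> R \<Longrightarrow> gen_ideal R G \<subseteq> R"
  unfolding gen_ideal_def by (auto intro!: subring_sum subring_mult)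

lemma gen_ideal_subset_radical: "G \<subseteq> R \<Longrightarrow> x \<in> gen_ideal R G \<Longrightarrow> x \<in> radical_in R (gen_ideal R G)"
  unfolding radical_in_def using gen_ideal_subset by (auto intro!: exI[of _ 1])

lemma radical_in_mult:
  assumes r: "r \<in> R" and x: "x \<in> radical_in R (gen_ideal R G)"
  shows "r * x \<in> radical_in R (gen_ideal R G)"
proof -
  obtain m where "x ^ m \<in> gen_ideal R G" "x \<in> R" using x unfolding radical_in_def by auto
  then have "(r * x) ^ m \<in> gen_ideal R G"
    using r by (auto simp: power_mult_distrib intro: gen_ideal_mult subring_power)
  then show ?thesis unfolding radical_in_def using r \<open>x \<in> R\<close> by (auto intro: subring_mult)
qed

lemma unit_mod_radical_imp_unit_mod:
  assumes x: "x \<in> R" and u: "u \<in> R" and unit: "1 - x * u \<in> radical_in R (gen_ideal R G)"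
  shows "\<exists>s\<in>R. 1 - x * s \<in> gen_ideal R G"
proof -
  obtain m where m: "(1 - x * u) ^ m \<in> gen_ideal R G" using unit unfolding radical_in_def by auto
  define s where "s = u * (\<Sum>i<m. (1 - x * u) ^ i)"
  have "1 - x * s = (1 - x * u) ^ m"
    unfolding s_def using power_diff_1_eq[of "1 - x * u" m] by (simp add: algebra_simps)
  moreover have "s \<in> R" unfolding s_def using x u by (intro subring_closed) auto
  ultimately show ?thesis using m by metis
qed

lemma radical_in_cancel_unit_mod:
  assumes x: "x \<in> R" and u: "u \<in> R" and unit: "1 - x * u \<in> gen_ideal R G"
    and b: "b \<in> R" and xb: "x * b \<in> radical_in R (gen_ideal R G)"
  shows "b \<in> radical_in R (gen_ideal R G)"
proof -
  obtain m where m: "(x * b) ^ m \<in> gen_ideal R G" using xb unfolding radical_in_def by auto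
  define s where "s = b ^ m * (\<Sum>i<m. (x * u) ^ i)"
  have "b ^ m = b ^ m * (1 - (x * u) ^ m) + u ^ m * (x * b) ^ m"
    by (simp add: algebra_simps power_mult_distrib)
  also have "1 - (x * u) ^ m = (1 - x * u) * (\<Sum>i<m. (x * u) ^ i)"
    using power_diff_1_eq[of "x * u" m] by (simp add: algebra_simps)
  finally have "b ^ m = s * (1 - x * u) + u ^ m * (x * b) ^ m"
    unfolding s_def by (simp add: ac_simps)
  moreover have "s \<in> R" unfolding s_def using x u b by (intro subring_closed) auto
  ultimately have "b ^ m \<in> gen_ideal R G"
    using unit m u by (metis gen_ideal_add gen_ideal_mult subring_power)
  then show ?thesis using b unfolding radical_in_def by auto
qed

end

lemma sum_powers_split_lowest:
  fixes c :: "nat \<Rightarrow> 'b::comm_ring_1"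
  assumes "i0 \<le> N" "\<And>i. i < i0 \<Longrightarrow> c i = 0"
  shows "(\<Sum>i\<le>N. c i * x ^ i) = x ^ i0 * (c i0 + x * (\<Sum>i\<in>{Suc i0..N}. c i * x ^ (i - Suc i0)))"
proof -
  have "(\<Sum>i\<le>N. c i * x ^ i) = (\<Sum>i\<in>{i0..N}. c i * x ^ i)"
    by (rule sum.mono_neutral_right) (use assms in auto)
  also have "\<dots> = c i0 * x ^ i0 + (\<Sum>i\<in>{Suc i0..N}. c i * x ^ i)"
    using assms(1) by (simp add: sum.atLeast_Suc_atMost)
  also have "(\<Sum>i\<in>{Suc i0..N}. c i * x ^ i) = (\<Sum>i\<in>{Suc i0..N}. x ^ i0 * x * (c i * x ^ (i - Suc i0)))"
  proof (rule sum.cong[OF refl])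
    fix i assume "i \<in> {Suc i0..N}"
    then have "i = i0 + Suc (i - Suc i0)" by auto
    then have "x ^ i = x ^ i0 * x * x ^ (i - Suc i0)" by (metis power_add power_Suc mult.assoc)
    then show "c i * x ^ i = x ^ i0 * x * (c i * x ^ (i - Suc i0))" by (simp add: ac_simps)
  qed
  finally show ?thesis by (simp add: sum_distrib_left algebra_simps)
qed

lemma monic_normalization:
  fixes c :: "nat \<Rightarrow> 'b::field"
  assumes "c D \<noteq> 0"
  shows "z ^ D - (\<Sum>k<D. - c k / c D * z ^ k) = inverse (c D) * (\<Sum>k\<le>D. c k * z ^ k)"
proof -
  have "(\<Sum>k\<le>D. c k * z ^ k) = c D * z ^ D + (\<Sum>k<D. c k * z ^ k)"
    by (simp add: lessThan_Suc_atMost[symmetric])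
  then show ?thesis using assms by (simp add: ring_distribs sum_distrib_left sum_negf divide_inverse ac_simps)
qed

lemma unit_or_zero_divisor_mod_radical:
  fixes R :: "'b::field set"
  assumes R: "subring R" and G: "G \<subseteq> R" and x: "x \<in> R"
    and c: "\<And>i. i \<le> N \<Longrightarrow> c i \<in> R" "\<And>i. i \<le> N \<Longrightarrow> c i \<noteq> 0 \<Longrightarrow> inverse (c i) \<in> R"
    and nontrivial: "\<exists>i\<le>N. c i \<noteq> 0"
    and relation: "(\<Sum>i\<le>N. c i * x ^ i) \<in> gen_ideal R G"
  shows "(\<exists>u\<in>R. 1 - x * u \<in> radical_in R (gen_ideal R G))
    \<or> (\<exists>b\<in>R. b \<notin> radical_in R (gen_ideal R G) \<and> x * b \<in> radical_in R (gen_ideal R G))"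
proof -
  define i0 where "i0 = (LEAST i. c i \<noteq> 0)"
  obtain i1 where i1: "i1 \<le> N" "c i1 \<noteq> 0" using nontrivial by auto
  have ci0: "c i0 \<noteq> 0" unfolding i0_def using i1(2) by (rule LeastI)
  have i0N: "i0 \<le> N" unfolding i0_def using i1 Least_le[of "\<lambda>i. c i \<noteq> 0" i1] by simp
  have below: "i < i0 \<Longrightarrow> c i = 0" for i unfolding i0_def using not_less_Least by blast
  define g where "g = (\<Sum>i\<in>{Suc i0..N}. c i * x ^ (i - Suc i0))"
  define q where "q = c i0 + x * g"
  have g: "g \<in> R" unfolding g_def using c(1) x by (intro subring_closed[OF R]) auto
  have q: "q \<in> R" unfolding q_def using c(1)[OF i0N] x g by (intro subring_closed[OF R])
  have factor: "x ^ i0 * q \<in> gen_ideal R G"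
    using relation sum_powers_split_lowest[OF i0N below] unfolding q_def g_def by simp
  show ?thesis
  proof (cases "q \<in> radical_in R (gen_ideal R G)")
    case True
    define u where "u = - g * inverse (c i0)"
    have "1 - x * u = inverse (c i0) * q" unfolding u_def q_def using ci0 by (simp add: field_simps)
    then have "1 - x * u \<in> radical_in R (gen_ideal R G)"
      using radical_in_mult[OF R c(2)[OF i0N ci0] True] by simp
    moreover have "u \<in> R" unfolding u_def using g c(2)[OF i0N ci0] by (intro subring_closed[OF R])
    ultimately show ?thesis by blast
  next
    case False
    have "i0 \<noteq> 0" using False factor gen_ideal_subset_radical[OF R G] by (cases i0) auto
    then obtain k where k: "i0 = Suc k" by (cases i0) auto
    have "(x * q) ^ i0 = q ^ k * (x ^ i0 * q)" unfolding k by (simp add: power_mult_distrib ac_simps)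
    also have "\<dots> \<in> gen_ideal R G" by (rule gen_ideal_mult[OF R subring_power[OF R q] factor])
    finally have "x * q \<in> radical_in R (gen_ideal R G)"
      unfolding radical_in_def using x q subring_mult[OF R] by blast
    then show ?thesis using False q by blast
  qed
qed

section \<open>Polynomials in a set of variables\<close>

lemma keys_add_nat:
  "Poly_Mapping.keys (a + b :: 'x \<Rightarrow>\<^sub>0 nat) = Poly_Mapping.keys a \<union> Poly_Mapping.keys b"
  by (auto simp: in_keys_iff lookup_add)

lemma subring_polys_in: "subring (polys_in V :: 'a::comm_ring_1 mpoly set)"
proof -
  have closed: "x + y \<in> polys_in V \<and> x * y \<in> polys_in V \<and> x - y \<in> polys_in V"
    if x: "x \<in> polys_in V" and y: "y \<in> polys_in V" for x y :: "'a mpoly"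
  proof (intro conjI)
    show "x + y \<in> polys_in V" using x y keys_add[of x y] unfolding polys_in_def by blast
    show "x - y \<in> polys_in V" using x y keys_diff[of x y] unfolding polys_in_def by blast
    show "x * y \<in> polys_in V"
    proof (unfold polys_in_def, intro CollectI ballI)
      fix m assume "m \<in> Poly_Mapping.keys (x * y)"
      then obtain a b where "m = a + b" "a \<in> Poly_Mapping.keys x" "b \<in> Poly_Mapping.keys y"
        using keys_mult[of x y] by blast
      then show "Poly_Mapping.keys m \<subseteq> V" using x y unfolding polys_in_def by (simp add: keys_add_nat)
    qed
  qed
  have "0 \<in> polys_in V" "1 \<in> polys_in V" unfolding polys_in_def by simp_all
  then show ?thesis unfolding subring_def using closed by blast
qed

lemma polys_in_mono: "V \<subseteq> W \<Longrightarrow> polys_in V \<subseteq> polys_in W"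
  unfolding polys_in_def by auto

lemma Var_in_polys_in: "i \<in> V \<Longrightarrow> Var i \<in> polys_in V"
  unfolding polys_in_def Var_def by simp

lemma single_in_polys_in: "Poly_Mapping.keys m \<subseteq> V \<Longrightarrow> Poly_Mapping.single m c \<in> polys_in V"
  unfolding polys_in_def by simp

lemma sum_single_lookup:
  fixes p :: "'x \<Rightarrow>\<^sub>0 'b::comm_monoid_add"
  shows "(\<Sum>m\<in>Poly_Mapping.keys p. Poly_Mapping.single m (Poly_Mapping.lookup p m)) = p"
proof (rule poly_mapping_eqI)
  fix k
  have "Poly_Mapping.lookup (\<Sum>m\<in>Poly_Mapping.keys p. Poly_Mapping.single m (Poly_Mapping.lookup p m)) k
      = (\<Sum>m\<in>Poly_Mapping.keys p. if m = k then Poly_Mapping.lookup p m else 0)"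
    by (simp add: lookup_sum lookup_single when_def eq_commute)
  also have "\<dots> = Poly_Mapping.lookup p k"
    by (simp add: sum.delta' in_keys_iff)
  finally show "Poly_Mapping.lookup (\<Sum>m\<in>Poly_Mapping.keys p. Poly_Mapping.single m (Poly_Mapping.lookup p m)) k
      = Poly_Mapping.lookup p k" .
qed

lemma Var_power: "(Var i :: 'a::comm_ring_1 mpoly) ^ k = Poly_Mapping.single (Poly_Mapping.single i k) 1"
  by (induction k) (simp_all add: Var_def mult_single single_add[symmetric] add.commute)

lemma single_eq_const_mult_prod_Var:
  "(Poly_Mapping.single m c :: 'a::comm_ring_1 mpoly)
   = Poly_Mapping.single 0 c * (\<Prod>i\<in>Poly_Mapping.keys m. Var i ^ Poly_Mapping.lookup m i)"
proof -
  have prod_single: "(\<Prod>i\<in>A. Poly_Mapping.single (g i) (1::'a)) = Poly_Mapping.single (\<Sum>i\<in>A. g i) 1"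
    for A and g :: "nat \<Rightarrow> nat \<Rightarrow>\<^sub>0 nat"
    by (induction A rule: infinite_finite_induct) (simp_all add: mult_single)
  show ?thesis by (simp add: Var_power prod_single sum_single_lookup mult_single)
qed

definition var_coeff :: "nat \<Rightarrow> 'a::comm_ring_1 mpoly \<Rightarrow> nat \<Rightarrow> 'a mpoly" where
  "var_coeff j g k = (\<Sum>m\<in>{m \<in> Poly_Mapping.keys g. Poly_Mapping.lookup m j = k}.
      Poly_Mapping.single (m - Poly_Mapping.single j k) (Poly_Mapping.lookup g m))"

\<comment> \<open>\<open>Max {}\<close> is unspecified, which is harmless: the zero polynomial has all coefficients zero.\<close>
definition var_degree :: "nat \<Rightarrow> 'a::zero mpoly \<Rightarrow> nat" where
  "var_degree j g = Max ((\<lambda>m. Poly_Mapping.lookup m j) ` Poly_Mapping.keys g)"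

lemma minus_single_add_single:
  "Poly_Mapping.lookup m j = k \<Longrightarrow> m - Poly_Mapping.single j k + Poly_Mapping.single j k = (m :: 'x \<Rightarrow>\<^sub>0 nat)"
  by (rule poly_mapping_eqI) (auto simp: lookup_add lookup_minus lookup_single when_def)

lemma var_coeff_in_polys_in:
  assumes "g \<in> polys_in V"
  shows "var_coeff j g k \<in> polys_in (V - {j})"
  unfolding var_coeff_def
proof (rule subring_sum[OF subring_polys_in], rule single_in_polys_in)
  fix m assume m: "m \<in> {m \<in> Poly_Mapping.keys g. Poly_Mapping.lookup m j = k}"
  show "Poly_Mapping.keys (m - Poly_Mapping.single j k) \<subseteq> V - {j}"
  proof
    fix i assume i: "i \<in> Poly_Mapping.keys (m - Poly_Mapping.single j k)"
    then have "i \<noteq> j" using m by (auto simp: in_keys_iff lookup_minus)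
    moreover have "i \<in> Poly_Mapping.keys m" using i by (auto simp: in_keys_iff lookup_minus lookup_single)
    ultimately show "i \<in> V - {j}" using m assms unfolding polys_in_def by auto
  qed
qed

lemma var_coeff_expansion: "g = (\<Sum>k\<le>var_degree j g. var_coeff j g k * Var j ^ k)"
proof -
  let ?s = "\<lambda>m. Poly_Mapping.single m (Poly_Mapping.lookup g m)"
  have "var_coeff j g k * Var j ^ k
      = (\<Sum>m\<in>{m \<in> Poly_Mapping.keys g. Poly_Mapping.lookup m j = k}. ?s m)" for k
    unfolding var_coeff_def Var_power sum_distrib_right mult_single
    by (rule sum.cong) (auto simp: minus_single_add_single)
  then have "(\<Sum>k\<le>var_degree j g. var_coeff j g k * Var j ^ k)
      = (\<Sum>k\<le>var_degree j g. \<Sum>m\<in>{m \<in> Poly_Mapping.keys g. Poly_Mapping.lookup m j = k}. ?s m)"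
    by simp
  also have "\<dots> = (\<Sum>m\<in>Poly_Mapping.keys g. ?s m)"
    by (rule sum.group) (auto simp: var_degree_def)
  finally show ?thesis by (simp add: sum_single_lookup)
qed

lemma var_coeff_var_degree_neq_0:
  assumes "g \<noteq> 0"
  shows "var_coeff j g (var_degree j g) \<noteq> 0"
proof -
  let ?D = "var_degree j g" and ?keys = "{m \<in> Poly_Mapping.keys g. Poly_Mapping.lookup m j = var_degree j g}"
  have "?D \<in> (\<lambda>m. Poly_Mapping.lookup m j) ` Poly_Mapping.keys g"
    unfolding var_degree_def using assms by (intro Max_in) auto
  then obtain m0 where m0: "m0 \<in> ?keys" by auto
  have "m - Poly_Mapping.single j ?D = m0 - Poly_Mapping.single j ?D \<longleftrightarrow> m = m0" if "m \<in> ?keys" for m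
    by (metis (mono_tags, lifting) that m0 mem_Collect_eq minus_single_add_single)
  then have "Poly_Mapping.lookup (var_coeff j g ?D) (m0 - Poly_Mapping.single j ?D)
      = (\<Sum>m\<in>?keys. if m = m0 then Poly_Mapping.lookup g m else 0)"
    unfolding var_coeff_def lookup_sum by (intro sum.cong) (auto simp: lookup_single when_def)
  also have "\<dots> = Poly_Mapping.lookup g m0" using m0 by (simp add: sum.delta')
  also have "\<dots> \<noteq> 0" using m0 by (simp add: in_keys_iff)
  finally show ?thesis by auto
qed

definition to_fract :: "'b::idom \<Rightarrow> 'b fract" where
  "to_fract p = Fract p 1"

lemma to_fract_0 [simp]: "to_fract 0 = 0"
  and to_fract_1 [simp]: "to_fract 1 = 1"
  and to_fract_add [simp]: "to_fract (p + q) = to_fract p + to_fract q"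
  and to_fract_mult [simp]: "to_fract (p * q) = to_fract p * to_fract q"
  and to_fract_diff [simp]: "to_fract (p - q) = to_fract p - to_fract q"
  and to_fract_uminus [simp]: "to_fract (- p) = - to_fract p"
  and to_fract_eq_iff [simp]: "to_fract p = to_fract q \<longleftrightarrow> p = q"
  unfolding to_fract_def by (simp_all add: fract_collapse eq_fract)

lemma to_fract_eq_0_iff [simp]: "to_fract p = 0 \<longleftrightarrow> p = 0"
  using to_fract_eq_iff[of p 0] by simp

lemma to_fract_sum: "to_fract (sum f A) = (\<Sum>x\<in>A. to_fract (f x))"
  by (induction A rule: infinite_finite_induct) simp_all

lemma to_fract_prod: "to_fract (prod f A) = (\<Prod>x\<in>A. to_fract (f x))"
  by (induction A rule: infinite_finite_induct) simp_all

lemma to_fract_power: "to_fract (p ^ k) = to_fract p ^ k"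
  by (induction k) simp_all

lemma Fract_eq_to_fract_mult: "Fract p q = to_fract p * inverse (to_fract q)"
  unfolding to_fract_def by simp

definition eval_monomial :: "(nat \<Rightarrow> 'a::field mpoly fract) \<Rightarrow> (nat \<Rightarrow>\<^sub>0 nat) \<Rightarrow> 'a mpoly fract" where
  "eval_monomial \<phi> m = (\<Prod>i\<in>Poly_Mapping.keys m. \<phi> i ^ Poly_Mapping.lookup m i)"

definition eval_mpoly :: "(nat \<Rightarrow> 'a::field mpoly fract) \<Rightarrow> 'a mpoly \<Rightarrow> 'a mpoly fract" where
  "eval_mpoly \<phi> p = (\<Sum>m\<in>Poly_Mapping.keys p.
      to_fract (Poly_Mapping.single 0 (Poly_Mapping.lookup p m)) * eval_monomial \<phi> m)"

lemma eval_monomial_superset: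
  assumes "finite S" "Poly_Mapping.keys m \<subseteq> S"
  shows "eval_monomial \<phi> m = (\<Prod>i\<in>S. \<phi> i ^ Poly_Mapping.lookup m i)"
  unfolding eval_monomial_def
  by (rule prod.mono_neutral_left) (use assms in \<open>auto simp: in_keys_iff\<close>)

lemma eval_monomial_add: "eval_monomial \<phi> (a + b) = eval_monomial \<phi> a * eval_monomial \<phi> b"
proof -
  let ?S = "Poly_Mapping.keys a \<union> Poly_Mapping.keys b"
  have "eval_monomial \<phi> (a + b) = (\<Prod>i\<in>?S. \<phi> i ^ Poly_Mapping.lookup (a + b) i)"
    by (rule eval_monomial_superset) (auto simp: keys_add_nat)
  also have "\<dots> = (\<Prod>i\<in>?S. \<phi> i ^ Poly_Mapping.lookup a i) * (\<Prod>i\<in>?S. \<phi> i ^ Poly_Mapping.lookup b i)"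
    by (simp add: lookup_add power_add prod.distrib)
  also have "\<dots> = eval_monomial \<phi> a * eval_monomial \<phi> b"
    by (subst (1 2) eval_monomial_superset[symmetric]) auto
  finally show ?thesis .
qed

lemma eval_mpoly_superset:
  assumes "finite S" "Poly_Mapping.keys p \<subseteq> S"
  shows "eval_mpoly \<phi> p
    = (\<Sum>m\<in>S. to_fract (Poly_Mapping.single 0 (Poly_Mapping.lookup p m)) * eval_monomial \<phi> m)"
  unfolding eval_mpoly_def
  by (rule sum.mono_neutral_left) (use assms in \<open>auto simp: in_keys_iff\<close>)

lemma eval_mpoly_add: "eval_mpoly \<phi> (p + q) = eval_mpoly \<phi> p + eval_mpoly \<phi> q"
proof -
  let ?S = "Poly_Mapping.keys p \<union> Poly_Mapping.keys q"
  let ?t = "\<lambda>p m. to_fract (Poly_Mapping.single 0 (Poly_Mapping.lookup p m)) * eval_monomial \<phi> m"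
  have "eval_mpoly \<phi> (p + q) = (\<Sum>m\<in>?S. ?t (p + q) m)"
    by (rule eval_mpoly_superset) (use keys_add[of p q] in auto)
  also have "\<dots> = (\<Sum>m\<in>?S. ?t p m) + (\<Sum>m\<in>?S. ?t q m)"
    by (simp add: lookup_add single_add distrib_right sum.distrib)
  also have "\<dots> = eval_mpoly \<phi> p + eval_mpoly \<phi> q"
    by (subst (1 2) eval_mpoly_superset[symmetric]) auto
  finally show ?thesis .
qed

lemma eval_mpoly_single:
  "eval_mpoly \<phi> (Poly_Mapping.single m c) = to_fract (Poly_Mapping.single 0 c) * eval_monomial \<phi> m"
  unfolding eval_mpoly_def by (cases "c = 0") simp_all

lemma eval_mpoly_0 [simp]: "eval_mpoly \<phi> 0 = 0"
  unfolding eval_mpoly_def by simp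

lemma eval_mpoly_sum: "eval_mpoly \<phi> (sum f A) = (\<Sum>x\<in>A. eval_mpoly \<phi> (f x))"
  by (induction A rule: infinite_finite_induct) (simp_all add: eval_mpoly_add)

lemma eval_mpoly_diff: "eval_mpoly \<phi> (p - q) = eval_mpoly \<phi> p - eval_mpoly \<phi> q"
  using eval_mpoly_add[of \<phi> "p - q" q] by simp

lemma eval_mpoly_mult: "eval_mpoly \<phi> (p * q) = eval_mpoly \<phi> p * eval_mpoly \<phi> q"
proof -
  let ?s = "\<lambda>p m. Poly_Mapping.single m (Poly_Mapping.lookup p m)"
  have single_mult: "eval_mpoly \<phi> (?s p a * ?s q b) = eval_mpoly \<phi> (?s p a) * eval_mpoly \<phi> (?s q b)" for a b
    by (simp add: mult_single eval_mpoly_single eval_monomial_add ac_simps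
        flip: to_fract_mult del: to_fract_mult)
  have "p * q = (\<Sum>a\<in>Poly_Mapping.keys p. \<Sum>b\<in>Poly_Mapping.keys q. ?s p a * ?s q b)"
    by (simp add: sum_single_lookup flip: sum_product)
  then have "eval_mpoly \<phi> (p * q)
      = (\<Sum>a\<in>Poly_Mapping.keys p. eval_mpoly \<phi> (?s p a)) * (\<Sum>b\<in>Poly_Mapping.keys q. eval_mpoly \<phi> (?s q b))"
    by (simp add: eval_mpoly_sum single_mult sum_product)
  also have "\<dots> = eval_mpoly \<phi> p * eval_mpoly \<phi> q"
    unfolding eval_mpoly_single by (simp add: eval_mpoly_def)
  finally show ?thesis .
qed

lemma eval_mpoly_Var [simp]: "eval_mpoly \<phi> (Var i) = \<phi> i"
  unfolding Var_def eval_mpoly_single eval_monomial_def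
  by (simp add: to_fract_1[unfolded single_one[symmetric]])

lemma eval_mpoly_in_subring:
  assumes T: "subring T" and const: "\<And>c. to_fract (Poly_Mapping.single 0 c) \<in> T"
    and \<phi>: "\<And>i. i \<in> V \<Longrightarrow> \<phi> i \<in> T" and p: "p \<in> polys_in V"
  shows "eval_mpoly \<phi> p \<in> T"
  unfolding eval_mpoly_def eval_monomial_def
  using p \<phi> unfolding polys_in_def by (intro subring_closed[OF T] const) auto

lemma eval_mpoly_cong:
  assumes "\<And>i. i \<in> V \<Longrightarrow> \<phi> i = \<psi> i" "p \<in> polys_in V"
  shows "eval_mpoly \<phi> p = eval_mpoly \<psi> p"
  unfolding eval_mpoly_def eval_monomial_def
  using assms unfolding polys_in_def by (intro sum.cong refl arg_cong2[where f = "(*)"] prod.cong) (auto simp: subset_iff)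

lemma eval_mpoly_Var_eq_to_fract: "eval_mpoly (\<lambda>i. to_fract (Var i)) p = to_fract p"
proof -
  have single: "eval_mpoly (\<lambda>i. to_fract (Var i)) (Poly_Mapping.single m c) = to_fract (Poly_Mapping.single m c)"
    for m c
    unfolding eval_mpoly_single eval_monomial_def
    by (subst (2) single_eq_const_mult_prod_Var) (simp add: to_fract_prod to_fract_power)
  show ?thesis
    by (subst (1 2) sum_single_lookup[symmetric]) (simp add: eval_mpoly_sum to_fract_sum single)
qed

section \<open>Localisation at a multiplicative set\<close>

definition localization :: "'b::idom set \<Rightarrow> 'b set \<Rightarrow> 'b fract set" where
  "localization D P = {Fract p q | p q. p \<in> P \<and> q \<in> D}"

definition denominator_set :: "'b::idom set \<Rightarrow> 'b set \<Rightarrow> bool" where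
  "denominator_set D P \<longleftrightarrow> subring P \<and> D \<subseteq> P \<and> 1 \<in> D \<and> 0 \<notin> D \<and> (\<forall>a\<in>D. \<forall>b\<in>D. a * b \<in> D)"

context
  fixes D P :: "'b::idom set"
  assumes DP: "denominator_set D P"
begin

lemma denominator_set_subring: "subring P"
  and denominator_set_subset: "D \<subseteq> P"
  and denominator_set_1: "1 \<in> D"
  and denominator_set_nonzero: "q \<in> D \<Longrightarrow> q \<noteq> 0"
  and denominator_set_mult: "a \<in> D \<Longrightarrow> b \<in> D \<Longrightarrow> a * b \<in> D"
  using DP unfolding denominator_set_def by auto

lemma to_fract_in_localization: "p \<in> P \<Longrightarrow> to_fract p \<in> localization D P"
  unfolding localization_def to_fract_def using denominator_set_1 by blast

lemma subring_localization: "subring (localization D P)"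
proof -
  note P = denominator_set_subring
  have "x + y \<in> localization D P \<and> x * y \<in> localization D P \<and> x - y \<in> localization D P"
    if x: "x \<in> localization D P" and y: "y \<in> localization D P" for x y
  proof -
    obtain a b where ab: "x = Fract a b" "a \<in> P" "b \<in> D" using x unfolding localization_def by auto
    obtain c e where ce: "y = Fract c e" "c \<in> P" "e \<in> D" using y unfolding localization_def by auto
    have nonzero: "b \<noteq> 0" "e \<noteq> 0" using ab ce denominator_set_nonzero by auto
    have "x + y = Fract (a * e + c * b) (b * e)" "x - y = Fract (a * e - c * b) (b * e)"
      "x * y = Fract (a * c) (b * e)"
      using ab ce nonzero by simp_all
    moreover have "b * e \<in> D" using ab ce denominator_set_mult by auto
    moreover have "a * e + c * b \<in> P" "a * e - c * b \<in> P" "a * c \<in> P"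
      using ab ce denominator_set_subset by (auto intro!: subring_closed[OF P])
    ultimately show ?thesis unfolding localization_def by blast
  qed
  moreover have "0 \<in> localization D P" "1 \<in> localization D P"
    using to_fract_in_localization[OF subring_0[OF P]] to_fract_in_localization[OF subring_1[OF P]]
    by simp_all
  ultimately show ?thesis unfolding subring_def by blast
qed

lemma localization_common_denominator:
  assumes "finite G" "\<And>g. g \<in> G \<Longrightarrow> c g \<in> localization D P"
  shows "\<exists>Q\<in>D. \<exists>r. \<forall>g\<in>G. r g \<in> P \<and> to_fract Q * c g = to_fract (r g)"
  using assms
proof (induction G rule: finite_induct)
  case empty
  then show ?case using denominator_set_1 by blast
next
  case (insert g0 G)
  obtain Q r where Qr: "Q \<in> D" "\<forall>g\<in>G. r g \<in> P \<and> to_fract Q * c g = to_fract (r g)"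
    using insert by auto
  obtain a b where ab: "c g0 = Fract a b" "a \<in> P" "b \<in> D"
    using insert(4)[of g0] unfolding localization_def by auto
  have QbP: "Q \<in> P" "b \<in> P" using Qr(1) ab(3) denominator_set_subset by auto
  define r' where "r' g = (if g = g0 then Q * a else r g * b)" for g
  have "r' g \<in> P \<and> to_fract (Q * b) * c g = to_fract (r' g)" if g: "g \<in> insert g0 G" for g
  proof (cases "g = g0")
    case True
    have "to_fract (Q * b) * c g = Fract (Q * b * a) b" using True ab by (simp add: to_fract_def)
    also have "\<dots> = to_fract (Q * a)"
      using denominator_set_nonzero[OF ab(3)] by (simp add: to_fract_def eq_fract)
    finally show ?thesis using True QbP ab(2) by (auto simp: r'_def intro: subring_mult[OF denominator_set_subring])
  next
    case False
    then have "g \<in> G" using g by auto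
    then show ?thesis using False Qr QbP
      by (auto simp: r'_def ac_simps intro: subring_mult[OF denominator_set_subring])
  qed
  moreover have "Q * b \<in> D" using Qr(1) ab(3) denominator_set_mult by auto
  ultimately show ?case by blast
qed

lemma gen_ideal_localization_clear_denominators:
  assumes G: "finite G" and x: "x \<in> gen_ideal (localization D P) (to_fract ` G)"
  shows "\<exists>Q\<in>D. \<exists>y\<in>gen_ideal P G. to_fract Q * x = to_fract y"
proof -
  have inj: "inj_on to_fract G" by (auto simp: inj_on_def)
  obtain c where c: "\<forall>g\<in>G. c g \<in> localization D P" "x = (\<Sum>g\<in>G. c g * to_fract g)"
    using x gen_ideal_image[OF inj] by auto
  obtain Q r where Qr: "Q \<in> D" "\<forall>g\<in>G. r g \<in> P \<and> to_fract Q * c g = to_fract (r g)"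
    using localization_common_denominator[OF G, of c] c(1) by auto
  have "to_fract Q * x = (\<Sum>g\<in>G. to_fract Q * c g * to_fract g)"
    unfolding c(2) by (simp add: sum_distrib_left ac_simps)
  also have "\<dots> = to_fract (\<Sum>g\<in>G. r g * g)" using Qr(2) by (simp add: to_fract_sum)
  finally show ?thesis using Qr unfolding gen_ideal_def by blast
qed

lemma to_fract_in_gen_ideal_localization:
  assumes "y \<in> gen_ideal P G"
  shows "to_fract y \<in> gen_ideal (localization D P) (to_fract ` G)"
proof -
  have inj: "inj_on to_fract G" by (auto simp: inj_on_def)
  obtain c where c: "\<forall>g\<in>G. c g \<in> P" "y = (\<Sum>g\<in>G. c g * g)" using assms unfolding gen_ideal_def by auto
  have "to_fract y = (\<Sum>g\<in>G. to_fract (c g) * to_fract g)" unfolding c(2) by (simp add: to_fract_sum)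
  moreover have "\<forall>g\<in>G. to_fract (c g) \<in> localization D P" using c(1) to_fract_in_localization by blast
  ultimately show ?thesis unfolding gen_ideal_image[OF inj] by (intro exI[of _ "\<lambda>g. to_fract (c g)"]) simp
qed

end

section \<open>Linear dependence modulo a subspace\<close>

context
  fixes F I :: "'b::field set"
  assumes F: "subring F" and F_inverse: "\<And>x. x \<in> F \<Longrightarrow> inverse x \<in> F"
    and I_add: "\<And>x y. x \<in> I \<Longrightarrow> y \<in> I \<Longrightarrow> x + y \<in> I"
    and I_scale: "\<And>r x. r \<in> F \<Longrightarrow> x \<in> I \<Longrightarrow> r * x \<in> I"
begin

lemma subspace_diff: "x \<in> I \<Longrightarrow> y \<in> I \<Longrightarrow> x - y \<in> I"
  using I_add[of x "(- 1) * y"] I_scale[of "- 1" y] subring_uminus[OF F subring_1[OF F]] by simp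

text \<open>Gaussian elimination of the vector \<open>w\<close> from every row but \<open>i0\<close>.\<close>
lemma eliminate_vector:
  assumes B: "finite B" "w \<notin> B" and i0: "a i0 w \<noteq> 0"
    and rows: "\<And>i. i \<in> A \<Longrightarrow> v i - (\<Sum>b\<in>insert w B. a i b * b) \<in> I" and "i0 \<in> A" "i \<in> A"
    and coeffs: "\<And>i. i \<in> A \<Longrightarrow> a i w \<in> F"
  shows "(v i - a i w / a i0 w * v i0) - (\<Sum>b\<in>B. (a i b - a i w / a i0 w * a i0 b) * b) \<in> I"
proof -
  let ?\<beta> = "a i w / a i0 w"
  have "(v i - ?\<beta> * v i0) - (\<Sum>b\<in>B. (a i b - ?\<beta> * a i0 b) * b)
      = (v i - (\<Sum>b\<in>insert w B. a i b * b)) - ?\<beta> * (v i0 - (\<Sum>b\<in>insert w B. a i0 b * b))"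
    using B i0 by (simp add: algebra_simps sum_subtractf sum_distrib_left)
  also have "\<dots> \<in> I"
  proof (rule subspace_diff[OF rows[OF assms(6)] I_scale[OF _ rows[OF assms(5)]]])
    show "?\<beta> \<in> F"
      unfolding divide_inverse using assms(5,6) coeffs F_inverse by (auto intro: subring_mult[OF F])
  qed
  finally show ?thesis .
qed

lemma dependence_from_eliminated_rows:
  assumes A: "finite A" "i0 \<in> A" and \<beta>: "\<And>i. i \<in> A \<Longrightarrow> \<beta> i \<in> F"
    and c': "\<forall>i\<in>A - {i0}. c' i \<in> F" "\<exists>i\<in>A - {i0}. c' i \<noteq> 0"
      "(\<Sum>i\<in>A - {i0}. c' i * (v i - \<beta> i * v i0)) \<in> I"
  shows "\<exists>c. (\<forall>i\<in>A. c i \<in> F) \<and> (\<exists>i\<in>A. c i \<noteq> 0) \<and> (\<Sum>i\<in>A. c i * v i) \<in> I"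
proof -
  define c where "c i = (if i = i0 then - (\<Sum>j\<in>A - {i0}. c' j * \<beta> j) else c' i)" for i
  have "(\<Sum>i\<in>A. c i * v i) = c i0 * v i0 + (\<Sum>i\<in>A - {i0}. c i * v i)"
    using A by (simp add: sum.remove)
  also have "(\<Sum>i\<in>A - {i0}. c i * v i) = (\<Sum>i\<in>A - {i0}. c' i * v i)"
    unfolding c_def by (rule sum.cong) auto
  also have "c i0 * v i0 + (\<Sum>i\<in>A - {i0}. c' i * v i) = (\<Sum>i\<in>A - {i0}. c' i * (v i - \<beta> i * v i0))"
    unfolding c_def by (simp add: algebra_simps sum_subtractf sum_distrib_left)
  finally have "(\<Sum>i\<in>A. c i * v i) \<in> I" using c'(3) by simp
  moreover have "\<forall>i\<in>A. c i \<in> F"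
    unfolding c_def using c'(1) \<beta> by (auto intro!: subring_closed[OF F])
  moreover obtain j where "j \<in> A - {i0}" "c' j \<noteq> 0" using c'(2) by blast
  then have "\<exists>i\<in>A. c i \<noteq> 0" unfolding c_def by (intro bexI[of _ j]) auto
  ultimately show ?thesis by blast
qed

lemma linear_dependence_mod:
  assumes "finite B" "finite A" "card B < card A"
    and "\<And>i b. i \<in> A \<Longrightarrow> b \<in> B \<Longrightarrow> a i b \<in> F"
    and "\<And>i. i \<in> A \<Longrightarrow> v i - (\<Sum>b\<in>B. a i b * b) \<in> I"
  shows "\<exists>c. (\<forall>i\<in>A. c i \<in> F) \<and> (\<exists>i\<in>A. c i \<noteq> 0) \<and> (\<Sum>i\<in>A. c i * v i) \<in> I"
  using assms
proof (induction B arbitrary: A a v rule: finite_induct)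
  case empty
  then obtain i0 where i0: "i0 \<in> A" by fastforce
  have "(\<Sum>i\<in>A. (if i = i0 then 1 else 0) * v i) = (\<Sum>i\<in>A. if i = i0 then v i else 0)"
    by (rule sum.cong) auto
  also have "\<dots> = v i0" using i0 empty by (simp add: sum.delta')
  finally show ?case using i0 empty
    by (intro exI[of _ "\<lambda>i. if i = i0 then 1 else 0"]) (auto intro: subring_0[OF F] subring_1[OF F])
next
  case (insert w B)
  show ?case
  proof (cases "\<forall>i\<in>A. a i w = 0")
    case True
    then show ?thesis using insert.IH[of A a v] insert.prems insert.hyps by auto
  next
    case False
    then obtain i0 where i0: "i0 \<in> A" "a i0 w \<noteq> 0" by auto
    define \<beta> where "\<beta> i = a i w / a i0 w" for i
    have \<beta>: "i \<in> A \<Longrightarrow> \<beta> i \<in> F" for i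
      unfolding \<beta>_def divide_inverse using insert.prems(3) i0 F_inverse
      by (auto intro: subring_mult[OF F])
    have "\<exists>c'. (\<forall>i\<in>A - {i0}. c' i \<in> F) \<and> (\<exists>i\<in>A - {i0}. c' i \<noteq> 0)
        \<and> (\<Sum>i\<in>A - {i0}. c' i * (v i - \<beta> i * v i0)) \<in> I"
    proof (rule insert.IH[of "A - {i0}" "\<lambda>i b. a i b - \<beta> i * a i0 b"])
      show "finite (A - {i0})" using insert.prems(1) by simp
      show "card B < card (A - {i0})" using insert i0 by simp
      show "a i b - \<beta> i * a i0 b \<in> F" if "i \<in> A - {i0}" "b \<in> B" for i b
        using that insert.prems(3) \<beta> i0(1) by (auto intro!: subring_closed[OF F])
      show "(v i - \<beta> i * v i0) - (\<Sum>b\<in>B. (a i b - \<beta> i * a i0 b) * b) \<in> I" if "i \<in> A - {i0}" for i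
        unfolding \<beta>_def using insert.hyps insert.prems that i0 by (intro eliminate_vector) auto
    qed
    then obtain c' where c': "\<forall>i\<in>A - {i0}. c' i \<in> F" "\<exists>i\<in>A - {i0}. c' i \<noteq> 0"
        "(\<Sum>i\<in>A - {i0}. c' i * (v i - \<beta> i * v i0)) \<in> I"
      by blast
    show ?thesis by (rule dependence_from_eliminated_rows[OF insert.prems(1) i0(1) _ c']) (use \<beta> in simp)
  qed
qed

end

locale max_indep_setting =
  fixes n d :: nat and H :: "'a::field mpoly set" and f :: "'a mpoly"
  assumes d_le_n: "d \<le> n" and finite_H: "finite H" and H_subset_KX: "H \<subseteq> polys_in {0..<n}"
    and f_in_KX: "f \<in> polys_in {0..<n}"
    and max_indep: "max_indep_vars n (gen_ideal (polys_in {0..<n}) H) {0..<d}"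
begin

abbreviation KX :: "'a mpoly set" where "KX \<equiv> polys_in {0..<n}"
abbreviation KY :: "'a mpoly set" where "KY \<equiv> polys_in {0..<d}"
abbreviation KY_fract :: "'a mpoly fract set" where "KY_fract \<equiv> KY_Z d d"
abbreviation KYZ :: "'a mpoly fract set" where "KYZ \<equiv> KY_Z d n"
abbreviation I :: "'a mpoly fract set" where "I \<equiv> gen_ideal KYZ (to_fract ` H)"
abbreviation J :: "'a mpoly fract set" where "J \<equiv> radical_in KYZ I"

lemma KY_subset_KX: "KY \<subseteq> KX"
  using d_le_n by (intro polys_in_mono) auto

lemma denominator_set_KX: "denominator_set (KY - {0}) KX"
  unfolding denominator_set_def using subring_polys_in KY_subset_KX
  by (auto intro: subring_mult[OF subring_polys_in] subring_1[OF subring_polys_in])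

lemma denominator_set_KY: "denominator_set (KY - {0}) KY"
  unfolding denominator_set_def using subring_polys_in
  by (auto intro: subring_mult[OF subring_polys_in] subring_1[OF subring_polys_in])

lemma KYZ_eq_localization: "KYZ = localization (KY - {0}) KX"
  unfolding KY_Z_def localization_def by blast

lemma subring_KYZ: "subring KYZ"
  unfolding KYZ_eq_localization by (rule subring_localization[OF denominator_set_KX])

lemma to_fract_in_KYZ: "p \<in> KX \<Longrightarrow> to_fract p \<in> KYZ"
  unfolding KYZ_eq_localization by (rule to_fract_in_localization[OF denominator_set_KX])

lemma Fract_in_KYZ: "p \<in> KX \<Longrightarrow> q \<in> KY \<Longrightarrow> q \<noteq> 0 \<Longrightarrow> Fract p q \<in> KYZ"
  unfolding KY_Z_def by blast

lemma to_fract_H_subset_KYZ: "to_fract ` H \<subseteq> KYZ"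
  using to_fract_in_KYZ H_subset_KX by auto

lemma to_fract_in_I: "y \<in> gen_ideal KX H \<Longrightarrow> to_fract y \<in> I"
  unfolding KYZ_eq_localization by (rule to_fract_in_gen_ideal_localization[OF denominator_set_KX])

lemma I_clear_denominators: "x \<in> I \<Longrightarrow> \<exists>Q\<in>KY - {0}. \<exists>y\<in>gen_ideal KX H. to_fract Q * x = to_fract y"
  unfolding KYZ_eq_localization
  by (rule gen_ideal_localization_clear_denominators[OF denominator_set_KX finite_H])

lemma subring_KY_fract: "subring KY_fract"
proof -
  have "KY_fract = localization (KY - {0}) KY" unfolding KY_Z_def localization_def by blast
  then show ?thesis using subring_localization[OF denominator_set_KY] by simp
qed

lemma KY_fract_subset_KYZ: "KY_fract \<subseteq> KYZ"
  unfolding KY_Z_def using KY_subset_KX by blast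

lemma inverse_in_KY_fract:
  assumes "x \<in> KY_fract"
  shows "inverse x \<in> KY_fract"
proof -
  obtain p q where pq: "x = Fract p q" "p \<in> KY" "q \<in> KY" "q \<noteq> 0"
    using assms unfolding KY_Z_def by blast
  show ?thesis
  proof (cases "p = 0")
    case True
    then show ?thesis using assms pq(1) by (simp add: fract_collapse)
  next
    case False
    then show ?thesis using pq unfolding KY_Z_def by auto
  qed
qed

lemma to_fract_in_KY_fract: "p \<in> KY \<Longrightarrow> to_fract p \<in> KY_fract"
  unfolding KY_Z_def to_fract_def using subring_1[OF subring_polys_in] by fastforce

subsection \<open>The Rabinowitsch ideal\<close>

definition subst_inverse_f :: "nat \<Rightarrow> 'a mpoly fract" where
  "subst_inverse_f i = (if i = n then inverse (to_fract f) else to_fract (Var i))"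

lemma eval_subst_inverse_f_KX: "p \<in> KX \<Longrightarrow> eval_mpoly subst_inverse_f p = to_fract p"
  using eval_mpoly_cong[of "{0..<n}" subst_inverse_f "\<lambda>i. to_fract (Var i)" p]
  by (simp add: subst_inverse_f_def eval_mpoly_Var_eq_to_fract)

lemma eval_subst_inverse_f_rabinowitsch:
  "f \<noteq> 0 \<Longrightarrow> eval_mpoly subst_inverse_f (f * Var n - 1) = 0"
  by (simp add: eval_mpoly_diff eval_mpoly_mult eval_subst_inverse_f_KX[OF f_in_KX]
      eval_subst_inverse_f_KX[OF subring_1[OF subring_polys_in]] subst_inverse_f_def)

lemma denominator_set_powers_f: "f \<noteq> 0 \<Longrightarrow> denominator_set (range (\<lambda>k. f ^ k)) KX"
  unfolding denominator_set_def using subring_polys_in f_in_KX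
  by (auto simp: power_add[symmetric] intro: subring_power range_eqI[of _ _ 0])

lemma eval_subst_inverse_f_in_localization:
  assumes f: "f \<noteq> 0" and p: "p \<in> polys_in {0..<Suc n}"
  shows "eval_mpoly subst_inverse_f p \<in> localization (range (\<lambda>k. f ^ k)) KX"
proof (rule eval_mpoly_in_subring[OF subring_localization[OF denominator_set_powers_f[OF f]] _ _ p])
  show "to_fract (Poly_Mapping.single 0 c) \<in> localization (range (\<lambda>k. f ^ k)) KX" for c
    by (intro to_fract_in_localization[OF denominator_set_powers_f[OF f]] single_in_polys_in) simp
  show "subst_inverse_f i \<in> localization (range (\<lambda>k. f ^ k)) KX" if "i \<in> {0..<Suc n}" for i
  proof (cases "i = n")
    case True
    then have "subst_inverse_f i = Fract 1 (f ^ 1)" by (simp add: subst_inverse_f_def to_fract_def)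
    then show ?thesis unfolding localization_def using subring_1[OF subring_polys_in] by blast
  next
    case False
    then show ?thesis using that unfolding subst_inverse_f_def
      by (auto intro!: to_fract_in_localization[OF denominator_set_powers_f[OF f]] Var_in_polys_in)
  qed
qed

lemma Rabinowitsch_meets_KY_if_radical:
  assumes "to_fract f \<in> J"
  shows "\<exists>Q\<in>gen_ideal (polys_in {0..<Suc n}) (insert (f * Var n - 1) H) \<inter> KY. Q \<noteq> 0"
proof -
  let ?KXt = "polys_in {0..<Suc n} :: 'a mpoly set"
  have KX_subset: "KX \<subseteq> ?KXt" by (intro polys_in_mono) auto
  have t: "Var n \<in> ?KXt" by (intro Var_in_polys_in) auto
  obtain m where "to_fract (f ^ m) \<in> I" using assms unfolding radical_in_def by (auto simp: to_fract_power)
  then obtain Q y where Qy: "Q \<in> KY - {0}" "y \<in> gen_ideal KX H" "to_fract Q * to_fract (f ^ m) = to_fract y"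
    using I_clear_denominators by blast
  have Qfy: "Q * f ^ m = y" using Qy(3) by (simp flip: to_fract_mult del: to_fract_mult)
  \<comment> \<open>With \<open>t = Var n\<close>: \<open>Q = t\<^sup>m y - Q (1 + ft + \<dots> + (ft)\<^sup>m\<^sup>-\<^sup>1) (ft - 1)\<close>\<close>
  define c where "c = - Q * (\<Sum>i<m. (f * Var n) ^ i)"
  have "Var n ^ m * y + c * (f * Var n - 1) = Q * (f * Var n) ^ m - Q * ((f * Var n) ^ m - 1)"
    unfolding c_def Qfy[symmetric] power_diff_1_eq by (simp add: algebra_simps power_mult_distrib)
  also have "\<dots> = Q" by (simp add: algebra_simps)
  finally have "Var n ^ m * y + c * (f * Var n - 1) = Q" .
  moreover have "Var n ^ m * y + c * (f * Var n - 1) \<in> gen_ideal ?KXt (insert (f * Var n - 1) H)"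
  proof -
    have "Var n ^ m * y \<in> gen_ideal ?KXt H"
      using gen_ideal_mono_ring[OF KX_subset] Qy(2) t
      by (auto intro: gen_ideal_mult[OF subring_polys_in] subring_power[OF subring_polys_in])
    moreover have "c \<in> ?KXt"
      unfolding c_def using Qy(1) KY_subset_KX KX_subset f_in_KX t
      by (auto intro!: subring_closed[OF subring_polys_in])
    ultimately show ?thesis
      unfolding gen_ideal_insert[OF subring_polys_in finite_H] by (auto simp: add.commute)
  qed
  ultimately show ?thesis using Qy(1) by auto
qed

lemma radical_if_Rabinowitsch_meets_KY:
  assumes Q: "Q \<in> gen_ideal (polys_in {0..<Suc n}) (insert (f * Var n - 1) H)" "Q \<in> KY" "Q \<noteq> 0"
  shows "to_fract f \<in> J"
proof (cases "f = 0")
  case True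
  then show ?thesis
    using gen_ideal_subset_radical[OF subring_KYZ to_fract_H_subset_KYZ gen_ideal_0[OF subring_KYZ]] by simp
next
  case f: False
  let ?KXt = "polys_in {0..<Suc n} :: 'a mpoly set" and ?D = "range (\<lambda>k. f ^ k)"
  let ?ev = "eval_mpoly subst_inverse_f"
  obtain c y where "c \<in> ?KXt" "y \<in> gen_ideal ?KXt H" and Q_eq: "Q = c * (f * Var n - 1) + y"
    using Q(1) gen_ideal_insert[OF subring_polys_in finite_H] by blast
  then obtain cg where cg: "\<forall>g\<in>H. cg g \<in> ?KXt" "y = (\<Sum>g\<in>H. cg g * g)"
    unfolding gen_ideal_def by auto
  have "to_fract Q = ?ev Q" using Q(2) KY_subset_KX eval_subst_inverse_f_KX by auto
  also have "\<dots> = ?ev c * ?ev (f * Var n - 1) + (\<Sum>g\<in>H. ?ev (cg g) * ?ev g)"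
    unfolding Q_eq cg(2) by (simp only: eval_mpoly_add eval_mpoly_mult eval_mpoly_sum)
  also have "\<dots> = (\<Sum>g\<in>H. ?ev (cg g) * to_fract g)"
    using H_subset_KX eval_subst_inverse_f_KX by (simp add: eval_subst_inverse_f_rabinowitsch[OF f] subset_iff)
  finally have "to_fract Q = (\<Sum>g\<in>H. ?ev (cg g) * to_fract g)" .
  moreover have "\<forall>g\<in>H. ?ev (cg g) \<in> localization ?D KX"
    using cg(1) eval_subst_inverse_f_in_localization[OF f] by blast
  moreover have "inj_on to_fract H" by (auto simp: inj_on_def)
  ultimately have "to_fract Q \<in> gen_ideal (localization ?D KX) (to_fract ` H)"
    by (auto simp: gen_ideal_image)
  then obtain k z where z: "z \<in> gen_ideal KX H" "to_fract (f ^ k) * to_fract Q = to_fract z"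
    using gen_ideal_localization_clear_denominators[OF denominator_set_powers_f[OF f] finite_H] by blast
  have "to_fract f ^ k = Fract 1 Q * to_fract z"
    using z(2) Q(3) by (simp add: to_fract_power Fract_eq_to_fract_mult nonzero_eq_divide_eq flip: divide_inverse)
  also have "\<dots> \<in> I"
    using Fract_in_KYZ[OF subring_1[OF subring_polys_in] Q(2,3)] to_fract_in_I[OF z(1)]
    by (rule gen_ideal_mult[OF subring_KYZ])
  finally show ?thesis unfolding radical_in_def using to_fract_in_KYZ[OF f_in_KX] by auto
qed

lemma Rabinowitsch_ideal_disjoint_iff:
  "gen_ideal (polys_in {0..<Suc n}) (insert (f * Var n - 1) H) \<inter> KY = {0} \<longleftrightarrow> to_fract f \<notin> J"
  using Rabinowitsch_meets_KY_if_radical radical_if_Rabinowitsch_meets_KY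
    gen_ideal_0[OF subring_polys_in] subring_0[OF subring_polys_in]
  by blast

lemma unit_mod_I_if_meets_KY:
  assumes Q: "Q \<in> gen_ideal KX (insert f H)" "Q \<in> KY" "Q \<noteq> 0"
  shows "\<exists>u\<in>KYZ. 1 - to_fract f * u \<in> I"
proof -
  obtain c y where cy: "c \<in> KX" "y \<in> gen_ideal KX H" "Q = c * f + y"
    using Q(1) gen_ideal_insert[OF subring_polys_in finite_H] by blast
  have Q_eq: "to_fract Q = to_fract c * to_fract f + to_fract y" using cy(3) by simp
  have "1 - to_fract f * Fract c Q = (to_fract Q - to_fract f * to_fract c) * inverse (to_fract Q)"
    using Q(3) by (simp add: Fract_eq_to_fract_mult algebra_simps)
  also have "to_fract Q - to_fract f * to_fract c = to_fract y" using Q_eq by simp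
  also have "to_fract y * inverse (to_fract Q) = Fract 1 Q * to_fract y"
    by (simp add: Fract_eq_to_fract_mult)
  finally have "1 - to_fract f * Fract c Q = Fract 1 Q * to_fract y" .
  also have "\<dots> \<in> I"
    using Fract_in_KYZ[OF subring_1[OF subring_polys_in] Q(2,3)] to_fract_in_I[OF cy(2)]
    by (rule gen_ideal_mult[OF subring_KYZ])
  finally show ?thesis using Fract_in_KYZ[OF cy(1) Q(2,3)] by blast
qed

lemma meets_KY_if_unit_mod_I:
  assumes u: "u \<in> KYZ" and unit: "1 - to_fract f * u \<in> I"
  shows "\<exists>Q\<in>gen_ideal KX (insert f H) \<inter> KY. Q \<noteq> 0"
proof -
  obtain Q y where Qy: "Q \<in> KY - {0}" "y \<in> gen_ideal KX H" "to_fract Q * (1 - to_fract f * u) = to_fract y"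
    using I_clear_denominators[OF unit] by blast
  obtain p q where pq: "u = Fract p q" "p \<in> KX" "q \<in> KY" "q \<noteq> 0"
    using u unfolding KY_Z_def by blast
  have qu: "to_fract q * u = to_fract p" using pq(1,4) by (simp add: Fract_eq_to_fract_mult)
  have "to_fract (Q * q)
      = to_fract Q * to_fract q - to_fract Q * to_fract f * (to_fract q * u) + to_fract Q * to_fract p * to_fract f"
    unfolding qu by simp
  also have "\<dots> = to_fract q * (to_fract Q * (1 - to_fract f * u)) + to_fract Q * to_fract p * to_fract f"
    by (simp add: algebra_simps)
  also have "\<dots> = to_fract ((Q * p) * f + q * y)" using Qy(3) by (simp add: ac_simps)
  finally have Q_eq: "Q * q = (Q * p) * f + q * y" by (simp only: to_fract_eq_iff)
  have "Q * p \<in> KX" using Qy(1) pq(2) KY_subset_KX by (auto intro: subring_mult[OF subring_polys_in])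
  moreover have "q * y \<in> gen_ideal KX H"
    using pq(3) Qy(2) KY_subset_KX by (auto intro: gen_ideal_mult[OF subring_polys_in])
  ultimately have "Q * q \<in> gen_ideal KX (insert f H)"
    unfolding gen_ideal_insert[OF subring_polys_in finite_H] Q_eq by blast
  moreover have "Q * q \<in> KY" "Q * q \<noteq> 0" using Qy(1) pq(3,4) by (auto intro: subring_mult[OF subring_polys_in])
  ultimately show ?thesis by blast
qed

lemma ideal_with_f_disjoint_iff:
  "gen_ideal KX (insert f H) \<inter> KY = {0} \<longleftrightarrow> \<not> (\<exists>u\<in>KYZ. 1 - to_fract f * u \<in> I)"
  using unit_mod_I_if_meets_KY meets_KY_if_unit_mod_I
    gen_ideal_0[OF subring_polys_in] subring_0[OF subring_polys_in]
  by blast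

subsection \<open>Finiteness of \<open>K(Y)[Z]/I\<close> over \<open>K(Y)\<close>\<close>

lemma Var_integral_mod_I:
  assumes j: "j \<in> {d..<n}"
  shows "\<exists>D a. 0 < D \<and> (\<forall>k. a k \<in> KY_fract)
    \<and> to_fract (Var j) ^ D - (\<Sum>k<D. a k * to_fract (Var j) ^ k) \<in> I"
proof -
  let ?W = "insert j {0..<d}"
  have "?W \<subseteq> {0..<n}" "card ?W > card {0..<d}" using j d_le_n by auto
  then have "gen_ideal KX H \<inter> polys_in ?W \<noteq> {0}" using max_indep unfolding max_indep_vars_def by blast
  then obtain g where g: "g \<in> gen_ideal KX H" "g \<in> polys_in ?W" "g \<noteq> 0"
    using gen_ideal_0[OF subring_polys_in] subring_0[OF subring_polys_in] by blast
  define D where "D = var_degree j g"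
  define cf where "cf = var_coeff j g"
  have "?W - {j} = {0..<d}" using j by auto
  then have cf: "cf k \<in> KY" for k unfolding cf_def using var_coeff_in_polys_in[OF g(2)] by metis
  have cfD: "cf D \<noteq> 0" unfolding cf_def D_def using var_coeff_var_degree_neq_0[OF g(3)] .
  have g_eq: "g = (\<Sum>k\<le>D. cf k * Var j ^ k)" unfolding cf_def D_def by (rule var_coeff_expansion)
  have "0 < D"
  proof (rule ccontr)
    assume "\<not> 0 < D"
    then have "g = cf 0" using g_eq by simp
    then have "g \<in> gen_ideal KX H \<inter> KY" using g(1) cf by simp
    then show False using max_indep g(3) unfolding max_indep_vars_def by blast
  qed
  define a where "a k = - to_fract (cf k) / to_fract (cf D)" for k
  have "a k \<in> KY_fract" for k
  proof -
    have "a k = Fract (- cf k) (cf D)" unfolding a_def by (simp add: Fract_eq_to_fract_mult divide_inverse)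
    then show ?thesis unfolding KY_Z_def using cf cfD subring_uminus[OF subring_polys_in] by blast
  qed
  moreover have "to_fract (Var j) ^ D - (\<Sum>k<D. a k * to_fract (Var j) ^ k) = Fract 1 (cf D) * to_fract g"
  proof -
    have g_fract: "to_fract g = (\<Sum>k\<le>D. to_fract (cf k) * to_fract (Var j) ^ k)"
      by (subst g_eq) (simp add: to_fract_sum to_fract_power)
    have "to_fract (cf D) \<noteq> 0" using cfD by simp
    then have "to_fract (Var j) ^ D - (\<Sum>k<D. a k * to_fract (Var j) ^ k) = inverse (to_fract (cf D)) * to_fract g"
      unfolding a_def g_fract by (rule monic_normalization[of "\<lambda>k. to_fract (cf k)"])
    then show ?thesis by (simp add: Fract_eq_to_fract_mult)
  qed
  moreover have "Fract 1 (cf D) * to_fract g \<in> I"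
    using Fract_in_KYZ[OF subring_1[OF subring_polys_in] cf cfD] to_fract_in_I[OF g(1)]
    by (rule gen_ideal_mult[OF subring_KYZ])
  ultimately show ?thesis using \<open>0 < D\<close> by (intro exI[of _ D] exI[of _ a]) auto
qed

definition span_mod :: "'a mpoly fract set \<Rightarrow> 'a mpoly fract set" where
  "span_mod B = {x \<in> KYZ. \<exists>a. (\<forall>b\<in>B. a b \<in> KY_fract) \<and> x - (\<Sum>b\<in>B. a b * b) \<in> I}"

lemma KY_fract_in_KYZ: "r \<in> KY_fract \<Longrightarrow> r \<in> KYZ"
  using KY_fract_subset_KYZ by blast

lemma span_mod_0: "0 \<in> span_mod B"
  unfolding span_mod_def using subring_0[OF subring_KYZ] subring_0[OF subring_KY_fract] gen_ideal_0[OF subring_KYZ]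
  by (intro CollectI conjI exI[of _ "\<lambda>b. 0"]) auto

lemma span_mod_add: "x \<in> span_mod B \<Longrightarrow> y \<in> span_mod B \<Longrightarrow> x + y \<in> span_mod B"
proof -
  assume "x \<in> span_mod B" "y \<in> span_mod B"
  then obtain a a' where x: "x \<in> KYZ" "\<forall>b\<in>B. a b \<in> KY_fract" "x - (\<Sum>b\<in>B. a b * b) \<in> I"
    and y: "y \<in> KYZ" "\<forall>b\<in>B. a' b \<in> KY_fract" "y - (\<Sum>b\<in>B. a' b * b) \<in> I"
    unfolding span_mod_def by blast
  have "x + y - (\<Sum>b\<in>B. (a b + a' b) * b) = (x - (\<Sum>b\<in>B. a b * b)) + (y - (\<Sum>b\<in>B. a' b * b))"
    by (simp add: algebra_simps sum.distrib)
  also have "\<dots> \<in> I" using x(3) y(3) by (rule gen_ideal_add[OF subring_KYZ])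
  finally show ?thesis unfolding span_mod_def using x y subring_add[OF subring_KYZ] subring_add[OF subring_KY_fract]
    by (intro CollectI conjI exI[of _ "\<lambda>b. a b + a' b"]) auto
qed

lemma span_mod_scale: "r \<in> KY_fract \<Longrightarrow> x \<in> span_mod B \<Longrightarrow> r * x \<in> span_mod B"
proof -
  assume r: "r \<in> KY_fract" and "x \<in> span_mod B"
  then obtain a where x: "x \<in> KYZ" "\<forall>b\<in>B. a b \<in> KY_fract" "x - (\<Sum>b\<in>B. a b * b) \<in> I"
    unfolding span_mod_def by blast
  have "r * x - (\<Sum>b\<in>B. (r * a b) * b) = r * (x - (\<Sum>b\<in>B. a b * b))"
    by (simp add: algebra_simps sum_distrib_left)
  also have "\<dots> \<in> I" using KY_fract_in_KYZ[OF r] x(3) by (rule gen_ideal_mult[OF subring_KYZ])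
  finally show ?thesis unfolding span_mod_def
    using r x KY_fract_in_KYZ subring_mult[OF subring_KYZ] subring_mult[OF subring_KY_fract]
    by (intro CollectI conjI exI[of _ "\<lambda>b. r * a b"]) auto
qed

lemma span_mod_sum: "(\<And>l. l \<in> L \<Longrightarrow> y l \<in> span_mod B) \<Longrightarrow> sum y L \<in> span_mod B"
  by (induction L rule: infinite_finite_induct) (auto intro: span_mod_0 span_mod_add)

lemma span_mod_congruent:
  assumes x: "x \<in> KYZ" and y: "y \<in> span_mod B" and xy: "x - y \<in> I"
  shows "x \<in> span_mod B"
proof -
  obtain a where a: "\<forall>b\<in>B. a b \<in> KY_fract" "y - (\<Sum>b\<in>B. a b * b) \<in> I"
    using y unfolding span_mod_def by auto
  have "x - (\<Sum>b\<in>B. a b * b) = (x - y) + (y - (\<Sum>b\<in>B. a b * b))" by simp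
  also have "\<dots> \<in> I" using xy a(2) by (rule gen_ideal_add[OF subring_KYZ])
  finally show ?thesis unfolding span_mod_def using x a(1) by blast
qed

lemma span_mod_basis:
  assumes "finite B" "B \<subseteq> KYZ" "b0 \<in> B"
  shows "b0 \<in> span_mod B"
proof -
  have "(\<Sum>b\<in>B. (if b = b0 then 1 else 0) * b) = (\<Sum>b\<in>B. if b = b0 then b else 0)"
    by (rule sum.cong) auto
  also have "\<dots> = b0" using assms by (simp add: sum.delta')
  finally show ?thesis unfolding span_mod_def
    using assms subring_0[OF subring_KY_fract] subring_1[OF subring_KY_fract] gen_ideal_0[OF subring_KYZ]
    by (intro CollectI conjI exI[of _ "\<lambda>b. if b = b0 then 1 else 0"]) auto
qed

lemma span_mod_mult:
  assumes y: "y \<in> KYZ" and yB: "\<And>b. b \<in> B \<Longrightarrow> y * b \<in> span_mod B" and x: "x \<in> span_mod B"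
  shows "y * x \<in> span_mod B"
proof -
  obtain a where a: "x \<in> KYZ" "\<forall>b\<in>B. a b \<in> KY_fract" "x - (\<Sum>b\<in>B. a b * b) \<in> I"
    using x unfolding span_mod_def by blast
  have combination: "(\<Sum>b\<in>B. a b * (y * b)) \<in> span_mod B"
    by (rule span_mod_sum) (simp add: a(2) yB span_mod_scale)
  have "y * x - (\<Sum>b\<in>B. a b * (y * b)) = y * (x - (\<Sum>b\<in>B. a b * b))"
    by (simp add: algebra_simps sum_distrib_left)
  also have "\<dots> \<in> I" using y a(3) by (rule gen_ideal_mult[OF subring_KYZ])
  finally show ?thesis by (rule span_mod_congruent[OF subring_mult[OF subring_KYZ y a(1)] combination])
qed

lemma subring_span_mod_multipliers: "subring {r \<in> KYZ. \<forall>x\<in>span_mod B. r * x \<in> span_mod B}"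
  unfolding subring_def
proof (intro conjI ballI; (elim CollectE conjE)?)
  show "0 \<in> {r \<in> KYZ. \<forall>x\<in>span_mod B. r * x \<in> span_mod B}"
    using subring_0[OF subring_KYZ] span_mod_0 by auto
  show "1 \<in> {r \<in> KYZ. \<forall>x\<in>span_mod B. r * x \<in> span_mod B}"
    using subring_1[OF subring_KYZ] by auto
next
  fix r r'
  assume r: "r \<in> KYZ" "\<forall>x\<in>span_mod B. r * x \<in> span_mod B"
    and r': "r' \<in> KYZ" "\<forall>x\<in>span_mod B. r' * x \<in> span_mod B"
  show "r + r' \<in> {r \<in> KYZ. \<forall>x\<in>span_mod B. r * x \<in> span_mod B}"
    using r r' subring_add[OF subring_KYZ] span_mod_add by (auto simp: distrib_right)
  show "r * r' \<in> {r \<in> KYZ. \<forall>x\<in>span_mod B. r * x \<in> span_mod B}"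
    using r r' subring_mult[OF subring_KYZ] by (auto simp: mult.assoc)
  have "- 1 \<in> KY_fract" by (intro subring_uminus[OF subring_KY_fract] subring_1[OF subring_KY_fract])
  then have "r * x + (- 1) * (r' * x) \<in> span_mod B" if "x \<in> span_mod B" for x
    using span_mod_add[OF bspec[OF r(2) that] span_mod_scale[OF _ bspec[OF r'(2) that]]] by blast
  moreover have "(r - r') * x = r * x + (- 1) * (r' * x)" for x by (simp add: algebra_simps)
  ultimately have "(r - r') * x \<in> span_mod B" if "x \<in> span_mod B" for x using that by metis
  then show "r - r' \<in> {r \<in> KYZ. \<forall>x\<in>span_mod B. r * x \<in> span_mod B}"
    using r r' subring_diff[OF subring_KYZ] by auto
qed

text \<open>The multipliers preserving \<open>span_mod B\<close> form a subring containing \<open>K(Y)\<close> and \<open>Z\<close>,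
  hence all of \<open>K[X]\<close>.\<close>
lemma to_fract_mult_span_mod:
  assumes Z: "\<And>j b. j \<in> {d..<n} \<Longrightarrow> b \<in> B \<Longrightarrow> to_fract (Var j) * b \<in> span_mod B"
    and p: "p \<in> KX" and x: "x \<in> span_mod B"
  shows "to_fract p * x \<in> span_mod B"
proof -
  let ?T = "{r \<in> KYZ. \<forall>x\<in>span_mod B. r * x \<in> span_mod B}"
  have KY_fract_T: "r \<in> ?T" if "r \<in> KY_fract" for r
    using that KY_fract_in_KYZ span_mod_scale by blast
  have "to_fract (Var j) \<in> ?T" if "j \<in> {0..<n}" for j
  proof (cases "j < d")
    case True
    then show ?thesis by (intro KY_fract_T to_fract_in_KY_fract Var_in_polys_in) auto
  next
    case False
    then have "to_fract (Var j) \<in> KYZ" using that by (intro to_fract_in_KYZ Var_in_polys_in) auto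
    then show ?thesis using Z False that span_mod_mult by auto
  qed
  moreover have "to_fract (Poly_Mapping.single 0 c) \<in> ?T" for c
    by (intro KY_fract_T to_fract_in_KY_fract single_in_polys_in) simp
  ultimately have "eval_mpoly (\<lambda>i. to_fract (Var i)) p \<in> ?T"
    by (intro eval_mpoly_in_subring[OF subring_span_mod_multipliers _ _ p])
  then show ?thesis using x by (simp add: eval_mpoly_Var_eq_to_fract)
qed

lemma algebraic_mod_I_if_powers_in_span_mod:
  assumes B: "finite B" and powers: "\<And>i. x ^ i \<in> span_mod B"
  shows "\<exists>N c. (\<forall>i\<le>N. c i \<in> KY_fract) \<and> (\<exists>i\<le>N. c i \<noteq> 0) \<and> (\<Sum>i\<le>N. c i * x ^ i) \<in> I"
proof -
  have "\<forall>i. \<exists>a. (\<forall>b\<in>B. a b \<in> KY_fract) \<and> x ^ i - (\<Sum>b\<in>B. a b * b) \<in> I"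
    using powers unfolding span_mod_def by blast
  then obtain a where a: "\<forall>i. (\<forall>b\<in>B. a i b \<in> KY_fract) \<and> x ^ i - (\<Sum>b\<in>B. a i b * b) \<in> I"
    by (rule choice[THEN exE])
  have "\<exists>c. (\<forall>i\<in>{..card B}. c i \<in> KY_fract) \<and> (\<exists>i\<in>{..card B}. c i \<noteq> 0)
      \<and> (\<Sum>i\<in>{..card B}. c i * x ^ i) \<in> I"
    by (rule linear_dependence_mod[OF subring_KY_fract inverse_in_KY_fract gen_ideal_add[OF subring_KYZ] gen_ideal_mult[OF subring_KYZ KY_fract_in_KYZ] B])
      (use a in auto)
  then show ?thesis by blast
qed

definition reduced_monomials :: "(nat \<Rightarrow> nat) \<Rightarrow> 'a mpoly fract set" where
  "reduced_monomials D = (\<lambda>e. \<Prod>j\<in>{d..<n}. to_fract (Var j) ^ e j) ` PiE {d..<n} (\<lambda>j. {..<D j})"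

lemma finite_reduced_monomials: "finite (reduced_monomials D)"
  unfolding reduced_monomials_def by (intro finite_imageI finite_PiE) auto

lemma reduced_monomials_subset_KYZ: "reduced_monomials D \<subseteq> KYZ"
proof -
  have "to_fract (Var j) \<in> KYZ" if "j \<in> {d..<n}" for j
    using that by (intro to_fract_in_KYZ Var_in_polys_in) auto
  then show ?thesis
    unfolding reduced_monomials_def by (auto intro!: subring_prod[OF subring_KYZ] subring_power[OF subring_KYZ])
qed

lemma one_in_reduced_monomials: "(\<And>j. j \<in> {d..<n} \<Longrightarrow> 0 < D j) \<Longrightarrow> 1 \<in> reduced_monomials D"
  unfolding reduced_monomials_def
  by (rule image_eqI[of _ _ "restrict (\<lambda>_. 0) {d..<n}"]) auto

lemma Var_mult_reduced_monomial:
  assumes a: "\<And>j k. j \<in> {d..<n} \<Longrightarrow> a j k \<in> KY_fract"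
    and rel: "\<And>j. j \<in> {d..<n} \<Longrightarrow> to_fract (Var j) ^ D j - (\<Sum>k<D j. a j k * to_fract (Var j) ^ k) \<in> I"
    and j: "j \<in> {d..<n}" and b: "b \<in> reduced_monomials D"
  shows "to_fract (Var j) * b \<in> span_mod (reduced_monomials D)"
proof -
  let ?Z = "{d..<n}" and ?B = "reduced_monomials D" and ?z = "\<lambda>j. to_fract (Var j)"
  let ?PE = "PiE ?Z (\<lambda>j. {..<D j})" and ?mon = "\<lambda>e. \<Prod>j\<in>?Z. ?z j ^ e j"
  obtain e where e: "e \<in> ?PE" and b_eq: "b = ?mon e" using b unfolding reduced_monomials_def by blast
  let ?R = "\<Prod>i\<in>?Z - {j}. ?z i ^ e i"
  have mon_upd: "?mon (e(j := k)) = ?z j ^ k * ?R" for k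
    using j by (simp add: prod.remove)
  have upd: "k < D j \<Longrightarrow> ?mon (e(j := k)) \<in> ?B" for k
    unfolding reduced_monomials_def using e j by (intro imageI) (auto simp: PiE_iff extensional_def)
  have basis: "x \<in> ?B \<Longrightarrow> x \<in> span_mod ?B" for x
    by (rule span_mod_basis[OF finite_reduced_monomials reduced_monomials_subset_KYZ])
  have in_KYZ: "?z j * b \<in> KYZ"
    using j b reduced_monomials_subset_KYZ by (auto intro!: subring_mult[OF subring_KYZ] to_fract_in_KYZ Var_in_polys_in)
  have ej: "e j < D j" using e j by auto
  have b_upd: "b = ?z j ^ e j * ?R" using mon_upd[of "e j"] b_eq by simp
  show ?thesis
  proof (cases "Suc (e j) < D j")
    case True
    have "?z j * b = ?mon (e(j := Suc (e j)))" unfolding b_upd mon_upd by simp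
    then show ?thesis using basis upd True by simp
  next
    case False
    then have D_eq: "D j = Suc (e j)" using ej by simp
    define y where "y = (\<Sum>k<D j. a j k * ?mon (e(j := k)))"
    \<comment> \<open>the monic relation for \<open>?z j\<close> rewrites the one monomial that leaves \<open>?B\<close>\<close>
    have y: "y \<in> span_mod ?B"
      unfolding y_def by (rule span_mod_sum) (use a j upd basis span_mod_scale in simp)
    have R: "?R \<in> KYZ"
      by (auto intro!: subring_prod[OF subring_KYZ] subring_power[OF subring_KYZ] to_fract_in_KYZ Var_in_polys_in)
    have "?z j * b - y = ?R * (?z j ^ D j - (\<Sum>k<D j. a j k * ?z j ^ k))"
      unfolding y_def b_upd mon_upd D_eq by (simp add: algebra_simps sum_distrib_left sum_distrib_right)
    also have "\<dots> \<in> I" by (rule gen_ideal_mult[OF subring_KYZ R rel[OF j]])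
    finally show ?thesis by (rule span_mod_congruent[OF in_KYZ y])
  qed
qed

lemma f_algebraic_mod_I:
  "\<exists>N c. (\<forall>i\<le>N. c i \<in> KY_fract) \<and> (\<exists>i\<le>N. c i \<noteq> 0) \<and> (\<Sum>i\<le>N. c i * to_fract f ^ i) \<in> I"
proof -
  have "\<forall>j\<in>{d..<n}. \<exists>D a. 0 < D \<and> (\<forall>k. a k \<in> KY_fract)
      \<and> to_fract (Var j) ^ D - (\<Sum>k<D. a k * to_fract (Var j) ^ k) \<in> I"
    using Var_integral_mod_I by blast
  then obtain D where "\<forall>j\<in>{d..<n}. \<exists>a. 0 < D j \<and> (\<forall>k. a k \<in> KY_fract)
      \<and> to_fract (Var j) ^ D j - (\<Sum>k<D j. a k * to_fract (Var j) ^ k) \<in> I"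
    by (rule bchoice[THEN exE])
  then obtain a where Da: "\<forall>j\<in>{d..<n}. 0 < D j \<and> (\<forall>k. a j k \<in> KY_fract)
      \<and> to_fract (Var j) ^ D j - (\<Sum>k<D j. a j k * to_fract (Var j) ^ k) \<in> I"
    by (rule bchoice[THEN exE])
  have one: "1 \<in> span_mod (reduced_monomials D)"
    using Da by (intro span_mod_basis finite_reduced_monomials reduced_monomials_subset_KYZ one_in_reduced_monomials) auto
  have "to_fract (f ^ i) * 1 \<in> span_mod (reduced_monomials D)" for i
  proof (rule to_fract_mult_span_mod[OF _ subring_power[OF subring_polys_in f_in_KX] one])
    show "to_fract (Var j) * b \<in> span_mod (reduced_monomials D)"
      if "j \<in> {d..<n}" "b \<in> reduced_monomials D" for j b
      using Var_mult_reduced_monomial[of a D] Da that by blast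
  qed
  then have "to_fract f ^ i \<in> span_mod (reduced_monomials D)" for i by (simp add: to_fract_power)
  then show ?thesis by (rule algebraic_mod_I_if_powers_in_span_mod[OF finite_reduced_monomials])
qed

lemma nonzero_zero_divisor_iff:
  "nonzero_zero_divisor_mod KYZ J (to_fract f) \<longleftrightarrow> to_fract f \<notin> J \<and> \<not> (\<exists>u\<in>KYZ. 1 - to_fract f * u \<in> I)"
proof
  assume "nonzero_zero_divisor_mod KYZ J (to_fract f)"
  then obtain b where b: "to_fract f \<notin> J" "b \<in> KYZ" "b \<notin> J" "to_fract f * b \<in> J"
    unfolding nonzero_zero_divisor_mod_def by blast
  then show "to_fract f \<notin> J \<and> \<not> (\<exists>u\<in>KYZ. 1 - to_fract f * u \<in> I)"
    using radical_in_cancel_unit_mod[OF subring_KYZ to_fract_in_KYZ[OF f_in_KX]] by blast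
next
  assume f: "to_fract f \<notin> J \<and> \<not> (\<exists>u\<in>KYZ. 1 - to_fract f * u \<in> I)"
  obtain N c where c: "\<forall>i\<le>N. c i \<in> KY_fract" "\<exists>i\<le>N. c i \<noteq> 0" "(\<Sum>i\<le>N. c i * to_fract f ^ i) \<in> I"
    using f_algebraic_mod_I by blast
  have "(\<exists>u\<in>KYZ. 1 - to_fract f * u \<in> J) \<or> (\<exists>b\<in>KYZ. b \<notin> J \<and> to_fract f * b \<in> J)"
    using c KY_fract_in_KYZ inverse_in_KY_fract
    by (intro unit_or_zero_divisor_mod_radical[OF subring_KYZ to_fract_H_subset_KYZ to_fract_in_KYZ[OF f_in_KX]])
      auto
  then show "nonzero_zero_divisor_mod KYZ J (to_fract f)"
    using f unit_mod_radical_imp_unit_mod[OF subring_KYZ to_fract_in_KYZ[OF f_in_KX]]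
    unfolding nonzero_zero_divisor_mod_def using to_fract_in_KYZ[OF f_in_KX] by blast
qed

end

theorem theorem3:
  fixes n d :: nat and hs :: "('a::field) mpoly list" and f :: "'a mpoly"
  assumes "set hs \<subseteq> polys_in {0..<n}"
    and "f \<in> polys_in {0..<n}"
    and "d \<le> n"
    and "max_indep_vars n (gen_ideal (polys_in {0..<n}) (set hs)) {0..<d}"
  shows "(gen_ideal (polys_in {0..<Suc n}) (set ((f * Var n - 1) # hs)) \<inter> polys_in {0..<d} = {0}
          \<and> gen_ideal (polys_in {0..<n}) (set (f # hs)) \<inter> polys_in {0..<d} = {0})
     \<longleftrightarrow> nonzero_zero_divisor_mod (KY_Z d n)
           (radical_in (KY_Z d n) (gen_ideal (KY_Z d n) ((\<lambda>h. Fract h 1) ` set hs)))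
           (Fract f 1)"
proof -
  interpret max_indep_setting n d "set hs" f
    using assms by unfold_locales auto
  have "(\<lambda>h. Fract h 1) = to_fract" by (simp add: fun_eq_iff to_fract_def)
  then show ?thesis
    using Rabinowitsch_ideal_disjoint_iff ideal_with_f_disjoint_iff nonzero_zero_divisor_iff
    by (simp add: to_fract_def)
qed

end
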